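(* Let the data $y\in\mathbb{R}^n$, $X\in\mathbb{R}^{n\times p}$, $Z\in\mathbb{R}^{n\times q}$ be fixed, with $Z^TZ$ and $X^TP_ZX$ non-singular, and thin SVDs $X=U_X\Sigma_XV_X^T$, $Z=U_Z\Sigma_ZV_Z^T$. Let $\widehat e=y-X\widehat\beta_{2SLS}$ with $\widehat\beta_{2SLS}=(X^TP_ZX)^{-1}X^TP_Zy$, and let $\Pi\in\mathbb{R}^{m\times n}$ be random. Given $\varepsilon_1,\varepsilon_2,\varepsilon_3,\delta\in(0,1/2)$, suppose that jointly with probability at least $1-\delta$: $\|U_Z^T\Pi^T\Pi U_Z-I_q\|_2\le\varepsilon_1$, $\|U_Z^T\Pi^T\Pi U_X-U_Z^TU_X\|_2\le\varepsilon_2$, $\|U_Z^T\Pi^T\Pi\widehat e-U_Z^T\widehat e\|\le\varepsilon_3\|\widehat e\|$; and that $\sigma_{\min}^2(U_Z^TU_X)\ge 2f_1(\varepsilon_1,\varepsilon_2)$. Let $\widetilde A:=U_X^T\Pi^T\Pi U_Z(U_Z^T\Pi^T\Pi U_Z)^{-1}U_Z^T\Pi^T\Pi U_X$. Then with probability at least $1-\delta$, $\sigma_{\min}(\widetilde A)\ge\frac12\sigma_{\min}^2(U_Z^TU_X)$.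
   Context: $P_Z=Z(Z^TZ)^{-1}Z^T$; $f_1(\varepsilon_1,\varepsilon_2):=[\varepsilon_1+\varepsilon_2(\varepsilon_2+2)]/(1-\varepsilon_1)$. $\|\cdot\|_2$ is the spectral norm, $\sigma_{\min}$ the smallest singular value. *)

theory Defs
  imports "HOL-Probability.Probability"
begin

definition spec_norm :: "real^'c^'r \<Rightarrow> real" where
  "spec_norm A = onorm (\<lambda>x. A *v x)"

definition sigma_min :: "real^'c^'r \<Rightarrow> real" where
  "sigma_min A = Inf {norm (A *v x) | x. norm x = 1}"

definition proj :: "real^'q^'n \<Rightarrow> real^'n^'n" where
  "proj Z = Z ** matrix_inv (transpose Z ** Z) ** transpose Z"

definition f1 :: "real \<Rightarrow> real \<Rightarrow> real" where
  "f1 e1 e2 = (e1 + e2 * (e2 + 2)) / (1 - e1)"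

definition thin_svd :: "real^'c^'r \<Rightarrow> real^'c^'r \<Rightarrow> real^'c^'c \<Rightarrow> real^'c^'c \<Rightarrow> bool" where
  "thin_svd A U S V \<longleftrightarrow> transpose U ** U = mat 1 \<and>
     (\<forall>i j. i \<noteq> j \<longrightarrow> S $ i $ j = 0) \<and> (\<forall>i. S $ i $ i \<ge> 0) \<and>
     transpose V ** V = mat 1 \<and> V ** transpose V = mat 1 \<and>
     A = U ** S ** transpose V"

end

theory Submission
  imports Defs
begin

(* Write G = UZ^T S UZ, C = UZ^T S UX and B = UZ^T UX, so that A~ = C^T G^-1 C because
   S = Pi^T Pi is symmetric. For a unit vector x and v = C x, the bound ||G - I|| <= e1 gives
   v^T G^-1 v >= (1 - e1/(1 - e1)) ||v||^2, and ||C - B|| <= e2 together with ||B|| <= 1 gives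
   ||v||^2 >= ||B x||^2 - 2 e2. The combined loss is at most f1 e1 e2, so on the same event
   x^T A~ x >= sigma_min(B)^2 - f1 e1 e2 >= sigma_min(B)^2 / 2. *)

lemma norm_le_spec_norm: "norm ((A::real^'c^'r) *v x) \<le> spec_norm A * norm x"
  unfolding spec_norm_def by (rule onorm) simp

lemma spec_norm_nonneg: "0 \<le> spec_norm (A::real^'c^'r)"
  unfolding spec_norm_def by (rule onorm_pos_le) simp

lemma spec_norm_le:
  "(\<And>x. norm ((A::real^'c^'r) *v x) \<le> c * norm x) \<Longrightarrow> spec_norm A \<le> c"
  unfolding spec_norm_def by (rule onorm_le)

lemma norm_orthonormal_cols:
  assumes "transpose U ** U = mat 1"
  shows "norm ((U::real^'c^'r) *v x) = norm x"
proof -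
  have "(U *v x) \<bullet> (U *v x) = x \<bullet> x"
    by (metis assms dot_lmul_matrix matrix_vector_mul_assoc matrix_vector_mul_lid transpose_matrix_vector)
  then show ?thesis by (simp add: norm_eq_sqrt_inner)
qed

lemma norm_transpose_orthonormal_cols_le:
  assumes "transpose U ** U = mat 1"
  shows "norm (transpose (U::real^'c^'r) *v u) \<le> norm u"
proof -
  define c where "c = transpose U *v u"
  have "(norm c)\<^sup>2 = (U *v c) \<bullet> u"
    by (simp add: c_def power2_norm_eq_inner dot_lmul_matrix inner_commute)
  also have "\<dots> \<le> norm c * norm u"
    using norm_cauchy_schwarz norm_orthonormal_cols[OF assms] by metis
  finally show ?thesis
    unfolding c_def[symmetric] power2_eq_square
    by (metis mult_le_cancel_left_pos norm_ge_zero order_le_less)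
qed

lemma spec_norm_transpose_mult_orthonormal_cols_le_1:
  assumes "transpose U ** U = mat 1" "transpose V ** V = mat 1"
  shows "spec_norm (transpose (U::real^'a^'n) ** (V::real^'b^'n)) \<le> 1"
proof (rule spec_norm_le)
  fix x
  show "norm ((transpose U ** V) *v x) \<le> 1 * norm x"
    using norm_transpose_orthonormal_cols_le[OF assms(1), of "V *v x"]
    by (simp add: norm_orthonormal_cols[OF assms(2)] matrix_vector_mul_assoc[symmetric] del: transpose_matrix_vector)
qed

lemma sigma_min_nonneg: "0 \<le> sigma_min (A::real^'c^'r)"
  using norm_axis_1 unfolding sigma_min_def by (intro cInf_greatest) (blast, auto)

lemma sigma_min_le_norm: "norm x = 1 \<Longrightarrow> sigma_min (A::real^'c^'r) \<le> norm (A *v x)"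
  unfolding sigma_min_def by (rule cInf_lower) (auto intro: bdd_belowI[where m=0])

lemma sigma_min_ge_inner:
  assumes "\<And>x. norm x = 1 \<Longrightarrow> c \<le> x \<bullet> (A *v x)"
  shows "c \<le> sigma_min (A::real^'c^'c)"
  unfolding sigma_min_def
proof (rule cInf_greatest)
  show "{norm (A *v x) |x. norm x = 1} \<noteq> {}" using norm_axis_1 by blast
  fix t assume "t \<in> {norm (A *v x) |x. norm x = 1}"
  then obtain x where "t = norm (A *v x)" "norm x = 1" by blast
  then show "c \<le> t" using assms[of x] norm_cauchy_schwarz[of x "A *v x"] by simp
qed

lemma invertible_if_near_id:
  fixes G :: "real^'a^'a"
  assumes "spec_norm (G - mat 1) < 1"
  shows "invertible G"
proof -
  have "x = 0" if "G *v x = 0" for x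
  proof -
    have "norm x = norm ((G - mat 1) *v x)"
      using that by (simp add: matrix_vector_mult_diff_rdistrib)
    also have "\<dots> \<le> spec_norm (G - mat 1) * norm x" by (rule norm_le_spec_norm)
    finally show "x = 0"
      using assms by (metis mult_le_cancel_right1 norm_le_zero_iff not_le)
  qed
  then show ?thesis using matrix_left_invertible_ker invertible_left_inverse by blast
qed

lemma matrix_inv_right_apply:
  assumes "invertible (G::real^'a^'a)"
  shows "G *v (matrix_inv G *v v) = v"
proof -
  have "G ** matrix_inv G = mat 1 \<and> matrix_inv G ** G = mat 1"
    unfolding matrix_inv_def using assms unfolding invertible_def by (rule someI_ex)
  then show ?thesis by (metis matrix_vector_mul_assoc matrix_vector_mul_lid)
qed

lemma inner_matrix_inv_near_id_ge:
  fixes G :: "real^'a^'a"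
  assumes G: "spec_norm (G - mat 1) \<le> e" and e: "e < 1"
  shows "(1 - e/(1 - e)) * (norm v)\<^sup>2 \<le> v \<bullet> (matrix_inv G *v v)"
proof -
  define w where "w = matrix_inv G *v v"
  have "G *v w = v"
    unfolding w_def by (rule matrix_inv_right_apply) (use G e invertible_if_near_id in force)
  then have "w - v = - ((G - mat 1) *v w)" by (simp add: matrix_vector_mult_diff_rdistrib)
  then have wv: "norm (w - v) \<le> e * norm w"
    using norm_le_spec_norm[of "G - mat 1" w] G by (simp add: mult_right_mono order_trans)
  have "norm w \<le> norm v + norm (w - v)" using norm_triangle_sub by blast
  with wv e have "norm w \<le> norm v / (1 - e)" by (simp add: field_simps)
  moreover have "0 \<le> e" using spec_norm_nonneg G by (rule order_trans)
  ultimately have "e * norm w \<le> e * (norm v / (1 - e))" by (rule mult_left_mono)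
  with wv have wv': "norm (w - v) \<le> e/(1 - e) * norm v" by simp
  have "\<bar>v \<bullet> (w - v)\<bar> \<le> norm v * norm (w - v)" by (rule Cauchy_Schwarz_ineq2)
  also have "\<dots> \<le> norm v * (e/(1 - e) * norm v)" by (rule mult_left_mono[OF wv' norm_ge_zero])
  also have "\<dots> = e/(1 - e) * (norm v)\<^sup>2" by (simp add: power2_eq_square)
  finally show ?thesis
    by (simp add: w_def inner_diff_right power2_norm_eq_inner algebra_simps)
qed

lemma norm_add_sq_ge:
  fixes a d :: "'a::real_inner"
  assumes "norm a \<le> 1" "norm d \<le> e"
  shows "(norm a)\<^sup>2 - 2 * e \<le> (norm (a + d))\<^sup>2"
proof -
  have "\<bar>a \<bullet> d\<bar> \<le> e"
    using Cauchy_Schwarz_ineq2[of a d] assms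
    by (smt (verit) mult_left_le_one_le mult_mono norm_ge_zero)
  moreover have "(norm (a + d))\<^sup>2 = (norm a)\<^sup>2 + 2 * (a \<bullet> d) + d \<bullet> d"
    by (simp add: power2_norm_eq_inner inner_add_left inner_add_right inner_commute)
  ultimately show ?thesis using inner_ge_zero[of d] by linarith
qed

lemma diff_f1_le:
  fixes e1 e2 a :: real
  assumes "0 \<le> e1" "e1 < 1" "0 \<le> e2" "a \<le> 1"
  shows "a - f1 e1 e2 \<le> (a - 2 * e2) * (1 - e1/(1 - e1))"
proof -
  have "(a - f1 e1 e2) * (1 - e1) = a - e1 * a - e1 - e2 * e2 - 2 * e2"
    using assms by (simp add: f1_def field_simps)
  also have "\<dots> \<le> (a - 2 * e2) * (1 - 2 * e1)"
  proof -
    have "0 \<le> e1 * (1 - a) + e2 * e2 + 4 * (e1 * e2)" using assms by simp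
    then show ?thesis by (simp add: algebra_simps)
  qed
  also have "\<dots> = (a - 2 * e2) * (1 - e1/(1 - e1)) * (1 - e1)"
    using assms by (simp add: field_simps)
  finally show ?thesis using assms by simp
qed

lemma sigma_min_perturbed_gram_ge:
  fixes G :: "real^'q^'q" and B C :: "real^'p^'q"
  assumes G: "spec_norm (G - mat 1) \<le> e1" and e1: "e1 \<le> 1/2"
    and C: "spec_norm (C - B) \<le> e2" and B: "spec_norm B \<le> 1"
  shows "(sigma_min B)\<^sup>2 - f1 e1 e2 \<le> sigma_min (transpose C ** matrix_inv G ** C)"
proof (rule sigma_min_ge_inner)
  fix x :: "real^'p" assume x: "norm x = 1"
  define a where "a = norm (B *v x)"
  define v where "v = C *v x"
  have e_nonneg: "0 \<le> e1" "0 \<le> e2"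
    using G C spec_norm_nonneg order_trans by blast+
  have "a \<le> 1" using norm_le_spec_norm[of B x] B x by (simp add: a_def)
  have "sigma_min B \<le> a" unfolding a_def by (rule sigma_min_le_norm[OF x])
  then have "(sigma_min B)\<^sup>2 - f1 e1 e2 \<le> a\<^sup>2 - f1 e1 e2"
    using power_mono[OF _ sigma_min_nonneg] by simp
  also have "\<dots> \<le> (a\<^sup>2 - 2 * e2) * (1 - e1/(1 - e1))"
    using e_nonneg e1 \<open>a \<le> 1\<close> by (intro diff_f1_le) (auto simp: a_def power_le_one)
  also have "\<dots> \<le> (norm v)\<^sup>2 * (1 - e1/(1 - e1))"
  proof (rule mult_right_mono)
    have "v = B *v x + (C - B) *v x" by (simp add: v_def matrix_vector_mult_diff_rdistrib)
    moreover have "norm ((C - B) *v x) \<le> e2" using norm_le_spec_norm[of "C - B" x] C x by simp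
    ultimately show "a\<^sup>2 - 2 * e2 \<le> (norm v)\<^sup>2"
      using norm_add_sq_ge \<open>a \<le> 1\<close> unfolding a_def by metis
    show "0 \<le> 1 - e1/(1 - e1)" using e1 by (simp add: field_simps)
  qed
  also have "\<dots> \<le> v \<bullet> (matrix_inv G *v v)"
    using inner_matrix_inv_near_id_ge[OF G] e1 by (simp add: mult.commute)
  also have "\<dots> = x \<bullet> ((transpose C ** matrix_inv G ** C) *v x)"
    by (simp add: v_def matrix_vector_mul_assoc[symmetric] del: transpose_matrix_vector)
      (metis dot_lmul_matrix inner_commute transpose_matrix_vector)
  finally show "(sigma_min B)\<^sup>2 - f1 e1 e2 \<le> x \<bullet> ((transpose C ** matrix_inv G ** C) *v x)" .
qed

lemma transpose_cross_gram:
  fixes P :: "real^'n^'m" and U :: "real^'a^'n" and V :: "real^'b^'n"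
  shows "transpose (transpose U ** (transpose P ** P) ** V) = transpose V ** (transpose P ** P) ** U"
  by (simp add: matrix_transpose_mul matrix_mul_assoc)

theorem lemmaB5:
  fixes M :: "'w measure"
    and y :: "real^'n" and X :: "real^'p^'n" and Z :: "real^'q^'n"
    and UX :: "real^'p^'n" and SX :: "real^'p^'p" and VX :: "real^'p^'p"
    and UZ :: "real^'q^'n" and SZ :: "real^'q^'q" and VZ :: "real^'q^'q"
    and Pi :: "'w \<Rightarrow> real^'n^'m"
    and e1 e2 e3 \<delta> :: real
  assumes "prob_space M"
    and "invertible (transpose Z ** Z)"
    and "invertible (transpose X ** proj Z ** X)"
    and "thin_svd X UX SX VX"
    and "thin_svd Z UZ SZ VZ"
    and "e1 \<in> {0<..<1/2}" and "e2 \<in> {0<..<1/2}" and "e3 \<in> {0<..<1/2}" and "\<delta> \<in> {0<..<1/2}"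
    and "\<exists>E \<in> sets M. measure M E \<ge> 1 - \<delta> \<and>
          (\<forall>\<omega>\<in>E. let S = transpose (Pi \<omega>) ** Pi \<omega>;
                     beta = matrix_inv (transpose X ** proj Z ** X) *v (transpose X ** proj Z *v y);
                     e = y - X *v beta
                 in spec_norm (transpose UZ ** S ** UZ - mat 1) \<le> e1 \<and>
                    spec_norm (transpose UZ ** S ** UX - transpose UZ ** UX) \<le> e2 \<and>
                    norm (transpose UZ *v (S *v e) - transpose UZ *v e) \<le> e3 * norm e)"
    and "(sigma_min (transpose UZ ** UX))\<^sup>2 \<ge> 2 * f1 e1 e2"
  shows "\<exists>E \<in> sets M. measure M E \<ge> 1 - \<delta> \<and>
          (\<forall>\<omega>\<in>E. let S = transpose (Pi \<omega>) ** Pi \<omega>;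
                     At = transpose UX ** S ** UZ ** matrix_inv (transpose UZ ** S ** UZ)
                          ** transpose UZ ** S ** UX
                 in sigma_min At \<ge> (1/2) * (sigma_min (transpose UZ ** UX))\<^sup>2)"
proof -
  obtain E where E: "E \<in> sets M" "measure M E \<ge> 1 - \<delta>"
    and sketch: "\<And>\<omega>. \<omega> \<in> E \<Longrightarrow>
      spec_norm (transpose UZ ** (transpose (Pi \<omega>) ** Pi \<omega>) ** UZ - mat 1) \<le> e1 \<and>
      spec_norm (transpose UZ ** (transpose (Pi \<omega>) ** Pi \<omega>) ** UX - transpose UZ ** UX) \<le> e2"
    using assms(10) unfolding Let_def by blast
  have "transpose UX ** UX = mat 1" "transpose UZ ** UZ = mat 1"
    using assms(4,5) unfolding thin_svd_def by simp_all
  then have B: "spec_norm (transpose UZ ** UX) \<le> 1"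
    by (rule spec_norm_transpose_mult_orthonormal_cols_le_1[rotated])
  have "(1/2) * (sigma_min (transpose UZ ** UX))\<^sup>2 \<le> sigma_min
          (transpose UX ** S ** UZ ** matrix_inv (transpose UZ ** S ** UZ) ** transpose UZ ** S ** UX)"
    if "S = transpose (Pi \<omega>) ** Pi \<omega>" "\<omega> \<in> E" for S \<omega>
  proof -
    have G: "spec_norm (transpose UZ ** S ** UZ - mat 1) \<le> e1"
      and C: "spec_norm (transpose UZ ** S ** UX - transpose UZ ** UX) \<le> e2"
      using sketch that by simp_all
    have "(1/2) * (sigma_min (transpose UZ ** UX))\<^sup>2 \<le> (sigma_min (transpose UZ ** UX))\<^sup>2 - f1 e1 e2"
      using assms(11) by simp
    also have "\<dots> \<le> sigma_min (transpose (transpose UZ ** S ** UX) ** matrix_inv (transpose UZ ** S ** UZ)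
                                ** (transpose UZ ** S ** UX))"
      using sigma_min_perturbed_gram_ge[OF G _ C B] assms(6) by simp
    also have "\<dots> = sigma_min (transpose UX ** S ** UZ ** matrix_inv (transpose UZ ** S ** UZ)
                                ** transpose UZ ** S ** UX)"
      unfolding that(1) transpose_cross_gram by (simp only: matrix_mul_assoc)
    finally show ?thesis .
  qed
  with E show ?thesis unfolding Let_def by blast
qed

end
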